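(* Under the standing assumptions below, if $V\in C(\overline\Omega)$ is a viscosity solution of $F=0$ in $\Omega$, then $\mathcal J(V)=0$. In particular, the unique continuous viscosity solution of the Dirichlet problem $F(x,V,\nabla V,\nabla^2V)=0$ in $\Omega$, $V=g$ on $\partial\Omega$, satisfies $\mathcal J(V)=0$. Moreover, if $V\in C(\overline\Omega)$ satisfies $\mathcal J(V)=0$, then for $(\nu_X\otimes\nu_{\mathcal M})$-a.e. $(x,M)$ one has $F(\zeta_x,V(\zeta_x),M(x-\zeta_x),-M)\ge0$ whenever $\zeta_x\in\Omega$ and $F(\zeta^\star_x,V(\zeta^\star_x),-M(x-\zeta^\star_x),M)\le0$ whenever $\zeta^\star_x\in\Omega$.
   Context: Let $\Omega\subset\mathbb{R}^n$ be a bounded open set, $U\subset\mathbb{R}^m$ compact, $\beta\ge0$, and $f:\overline\Omega\times U\to\mathbb{R}^n$, $\Sigma:\overline\Omega\times U\to\mathbb{R}^{n\times n}$, $\ell:\overline\Omega\times U\to\mathbb{R}$ continuous, with $f,\Sigma$ Lipschitz in the state uniformly in the control and of linear growth; $a=\Sigma\Sigma^\top$. With $\mathbb S(n)$ the symmetric and $\mathbb S_{++}(n)$ the positive definite $n\times n$ matrices, define $H(x,p,A;c)=\ell(x,c)+p^\top f(x,c)+\tfrac12\operatorname{tr}(a(x,c)A)$ and $F(x,r,p,A)=\beta r-\inf_{c\in U}H(x,p,A;c)$. Standing assumptions: either $\beta>0$ or $\lambda I\preceq\Sigma\Sigma^\top\preceq\Lambda I$ on $\overline\Omega\times U$ for some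 $0<\lambda\le\Lambda<\infty$; $\partial\Omega$ is Lipschitz and $F$-regular; $g\in C(\partial\Omega)$. Viscosity (sub/super)solutions of $F=0$ in $\Omega$ are in the Crandall–Lions sense: a subsolution is u.s.c. on $\overline\Omega$ and satisfies $F(\zeta,V(\zeta),\nabla\phi(\zeta),\nabla^2\phi(\zeta))\le0$ whenever $\phi\in C^2(\Omega)$ and $V-\phi$ has a local max at $\zeta\in\Omega$; a supersolution is l.s.c. and satisfies $\ge0$ at local minima; a solution is both. Envelopes and penalty: for continuous $V$ and $(x,M)\in\overline\Omega\times\mathbb S_{++}(n)$ let $\zeta_x\in\arg\min_{\zeta\in\overline\Omega}\{V(\zeta)+\tfrac12(x-\zeta)^\top M(x-\zeta)\}$ and $\zeta^\star_x\in\arg\max_{\zeta\in\overline\Omega}\{V(\zeta)-\tfrac12(x-\zeta)^\top M(x-\zeta)\}$ (a fixed choice of contacts), and set $p^-=M(x-\zeta_x)$, $A^-=-M$, $p^+=-M(x-\zeta^\star_x)$, $A^+=M$. Define $\mathcal J_{\rm super}(x,M;V)=\max\{-F(\zeta_x,V(\zeta_x),p^-,A^-),0\}$ and $\mathcal J_{\rm sub}(x,M;V)=\max\{F(\zeta^\star_x,V(\zeta^\star_x),p^+,A^+),0\}$, each taken to be $0$ when the corresponding contact lies on $\partial\Omega$. Let $\nu_X$ be a probability measure on $\overline\Omega$ and $\nu_{\mathcal M}$ a probability measure on $\mathbb S_{++}(n)$, and $\mathcal J(V):=\mathbb E_{(x,M)\sim\nu_X\otimes\nu_{\mathcal M}}[\mathcal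 J_{\rm super}(x,M;V)+\mathcal J_{\rm sub}(x,M;V)]$. *)

theory Defs
  imports "HOL-Analysis.Analysis" "HOL-Probability.Probability"
begin

definition quadf :: "real^'n^'n \<Rightarrow> real^'n \<Rightarrow> real" where
  "quadf M v = v \<bullet> (M *v v)"

definition posdef :: "real^'n^'n \<Rightarrow> bool" where
  "posdef M \<longleftrightarrow> transpose M = M \<and> (\<forall>v. v \<noteq> 0 \<longrightarrow> quadf M v > 0)"

definition Hham :: "(real^'n \<Rightarrow> real^'m \<Rightarrow> real) \<Rightarrow> (real^'n \<Rightarrow> real^'m \<Rightarrow> real^'n)
    \<Rightarrow> (real^'n \<Rightarrow> real^'m \<Rightarrow> real^'n^'n)
    \<Rightarrow> real^'n \<Rightarrow> real^'n \<Rightarrow> real^'n^'n \<Rightarrow> real^'m \<Rightarrow> real" where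
  "Hham l f Sig x p A c =
     l x c + p \<bullet> f x c + (1/2) * trace ((Sig x c ** transpose (Sig x c)) ** A)"

definition Fop :: "real \<Rightarrow> (real^'m) set \<Rightarrow> (real^'n \<Rightarrow> real^'m \<Rightarrow> real)
    \<Rightarrow> (real^'n \<Rightarrow> real^'m \<Rightarrow> real^'n) \<Rightarrow> (real^'n \<Rightarrow> real^'m \<Rightarrow> real^'n^'n)
    \<Rightarrow> real^'n \<Rightarrow> real \<Rightarrow> real^'n \<Rightarrow> real^'n^'n \<Rightarrow> real" where
  "Fop \<beta> U l f Sig x r p A = \<beta> * r - (INF c\<in>U. Hham l f Sig x p A c)"

definition C2_on :: "(real^'n) set \<Rightarrow> (real^'n \<Rightarrow> real) \<Rightarrow> (real^'n \<Rightarrow> real^'n)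
    \<Rightarrow> (real^'n \<Rightarrow> real^'n^'n) \<Rightarrow> bool" where
  "C2_on S phi Dphi D2phi \<longleftrightarrow>
     (\<forall>y\<in>S. (phi has_derivative (\<lambda>h. Dphi y \<bullet> h)) (at y)
          \<and> (Dphi has_derivative (\<lambda>h. D2phi y *v h)) (at y))
     \<and> continuous_on S D2phi"

definition usc_on :: "'a::metric_space set \<Rightarrow> ('a \<Rightarrow> real) \<Rightarrow> bool" where
  "usc_on S V \<longleftrightarrow> (\<forall>x\<in>S. \<forall>t. V x < t \<longrightarrow> (\<exists>e>0. \<forall>y\<in>S. dist y x < e \<longrightarrow> V y < t))"

definition lsc_on :: "'a::metric_space set \<Rightarrow> ('a \<Rightarrow> real) \<Rightarrow> bool" where
  "lsc_on S V \<longleftrightarrow> (\<forall>x\<in>S. \<forall>t. t < V x \<longrightarrow> (\<exists>e>0. \<forall>y\<in>S. dist y x < e \<longrightarrow> t < V y))"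

definition visc_sub :: "(real^'n) set
    \<Rightarrow> (real^'n \<Rightarrow> real \<Rightarrow> real^'n \<Rightarrow> real^'n^'n \<Rightarrow> real) \<Rightarrow> (real^'n \<Rightarrow> real) \<Rightarrow> bool" where
  "visc_sub \<Omega> Fq V \<longleftrightarrow> usc_on (closure \<Omega>) V \<and>
     (\<forall>phi Dphi D2phi z. C2_on \<Omega> phi Dphi D2phi \<and> z \<in> \<Omega> \<and>
        (\<exists>e>0. \<forall>y\<in>\<Omega>. dist y z < e \<longrightarrow> V y - phi y \<le> V z - phi z)
        \<longrightarrow> Fq z (V z) (Dphi z) (D2phi z) \<le> 0)"

definition visc_super :: "(real^'n) set
    \<Rightarrow> (real^'n \<Rightarrow> real \<Rightarrow> real^'n \<Rightarrow> real^'n^'n \<Rightarrow> real) \<Rightarrow> (real^'n \<Rightarrow> real) \<Rightarrow> bool" where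
  "visc_super \<Omega> Fq V \<longleftrightarrow> lsc_on (closure \<Omega>) V \<and>
     (\<forall>phi Dphi D2phi z. C2_on \<Omega> phi Dphi D2phi \<and> z \<in> \<Omega> \<and>
        (\<exists>e>0. \<forall>y\<in>\<Omega>. dist y z < e \<longrightarrow> V y - phi y \<ge> V z - phi z)
        \<longrightarrow> Fq z (V z) (Dphi z) (D2phi z) \<ge> 0)"

definition visc_solution :: "(real^'n) set
    \<Rightarrow> (real^'n \<Rightarrow> real \<Rightarrow> real^'n \<Rightarrow> real^'n^'n \<Rightarrow> real) \<Rightarrow> (real^'n \<Rightarrow> real) \<Rightarrow> bool" where
  "visc_solution \<Omega> Fq V \<longleftrightarrow> visc_sub \<Omega> Fq V \<and> visc_super \<Omega> Fq V"

definition is_min_contact :: "(real^'n) set \<Rightarrow> (real^'n \<Rightarrow> real) \<Rightarrow> real^'n \<Rightarrow> real^'n^'n \<Rightarrow> real^'n \<Rightarrow> bool" where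
  "is_min_contact \<Omega> V x M z \<longleftrightarrow> z \<in> closure \<Omega> \<and>
     (\<forall>w\<in>closure \<Omega>. V z + (1/2) * quadf M (x - z) \<le> V w + (1/2) * quadf M (x - w))"

definition is_max_contact :: "(real^'n) set \<Rightarrow> (real^'n \<Rightarrow> real) \<Rightarrow> real^'n \<Rightarrow> real^'n^'n \<Rightarrow> real^'n \<Rightarrow> bool" where
  "is_max_contact \<Omega> V x M z \<longleftrightarrow> z \<in> closure \<Omega> \<and>
     (\<forall>w\<in>closure \<Omega>. V w - (1/2) * quadf M (x - w) \<le> V z - (1/2) * quadf M (x - z))"

definition contact_choice :: "(real^'n) set \<Rightarrow> (real^'n \<Rightarrow> real)
    \<Rightarrow> (real^'n \<Rightarrow> real^'n^'n \<Rightarrow> real^'n) \<Rightarrow> (real^'n \<Rightarrow> real^'n^'n \<Rightarrow> real^'n) \<Rightarrow> bool" where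
  "contact_choice \<Omega> V zmin zmax \<longleftrightarrow>
     (\<forall>x\<in>closure \<Omega>. \<forall>M. posdef M \<longrightarrow>
        is_min_contact \<Omega> V x M (zmin x M) \<and> is_max_contact \<Omega> V x M (zmax x M))"

definition J_super :: "(real^'n) set \<Rightarrow> (real^'n \<Rightarrow> real \<Rightarrow> real^'n \<Rightarrow> real^'n^'n \<Rightarrow> real)
    \<Rightarrow> (real^'n \<Rightarrow> real) \<Rightarrow> (real^'n \<Rightarrow> real^'n^'n \<Rightarrow> real^'n) \<Rightarrow> real^'n \<Rightarrow> real^'n^'n \<Rightarrow> real" where
  "J_super \<Omega> Fq V zmin x M =
     (let z = zmin x M in
      if z \<in> \<Omega> then max (- Fq z (V z) (M *v (x - z)) (- M)) 0 else 0)"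

definition J_sub :: "(real^'n) set \<Rightarrow> (real^'n \<Rightarrow> real \<Rightarrow> real^'n \<Rightarrow> real^'n^'n \<Rightarrow> real)
    \<Rightarrow> (real^'n \<Rightarrow> real) \<Rightarrow> (real^'n \<Rightarrow> real^'n^'n \<Rightarrow> real^'n) \<Rightarrow> real^'n \<Rightarrow> real^'n^'n \<Rightarrow> real" where
  "J_sub \<Omega> Fq V zmax x M =
     (let z = zmax x M in
      if z \<in> \<Omega> then max (Fq z (V z) (- (M *v (x - z))) M) 0 else 0)"

definition Jcost :: "(real^'n) measure \<Rightarrow> (real^'n^'n) measure \<Rightarrow> (real^'n) set
    \<Rightarrow> (real^'n \<Rightarrow> real \<Rightarrow> real^'n \<Rightarrow> real^'n^'n \<Rightarrow> real) \<Rightarrow> (real^'n \<Rightarrow> real)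
    \<Rightarrow> (real^'n \<Rightarrow> real^'n^'n \<Rightarrow> real^'n) \<Rightarrow> (real^'n \<Rightarrow> real^'n^'n \<Rightarrow> real^'n) \<Rightarrow> ennreal" where
  "Jcost \<nu>X \<nu>M \<Omega> Fq V zmin zmax =
     (\<integral>\<^sup>+ xm. ennreal (J_super \<Omega> Fq V zmin (fst xm) (snd xm) + J_sub \<Omega> Fq V zmax (fst xm) (snd xm))
        \<partial>(\<nu>X \<Otimes>\<^sub>M \<nu>M))"

end

theory Submission
  imports Defs
begin

text \<open>At an interior contact point \<open>\<zeta>\<close> the penalty \<open>w \<mapsto> \<plusminus>(x - w)\<^sup>T M (x - w)/2\<close>
  is a smooth test function touching \<open>V\<close> from below (resp. above), with gradient
  \<open>M(x - \<zeta>)\<close> (resp. \<open>-M(x - \<zeta>)\<close>) and Hessian \<open>-M\<close> (resp. \<open>M\<close>). Hence a viscosity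
  solution makes both penalty terms vanish at every \<open>(x, M) \<in> closure \<Omega> \<times> S\<^sub>+\<^sub>+(n)\<close>,
  a set of full \<open>\<nu>\<^sub>X \<otimes> \<nu>\<^sub>M\<close>-measure. Conversely, a nonnegative integrand with
  vanishing integral vanishes almost everywhere.\<close>

lemma has_derivative_quadf:
  fixes M :: "real^'n^'n"
  assumes "transpose M = M"
  shows "(quadf M has_derivative (\<lambda>h. 2 * ((M *v v) \<bullet> h))) (at v)"
proof -
  have "((\<lambda>v. v \<bullet> (M *v v)) has_derivative (\<lambda>h. v \<bullet> (M *v h) + h \<bullet> (M *v v))) (at v)"
    by (intro has_derivative_inner has_derivative_ident
        bounded_linear.has_derivative[OF matrix_vector_mul_bounded_linear])
  moreover have "v \<bullet> (M *v h) = (M *v v) \<bullet> h" for h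
    using dot_lmul_matrix[of v M h] vector_transpose_matrix[of v M] assms by simp
  ultimately show ?thesis
    unfolding quadf_def[abs_def] by (simp add: inner_commute)
qed

lemma C2_on_half_quadf_diff:
  fixes M :: "real^'n^'n"
  assumes "transpose M = M"
  shows "C2_on S (\<lambda>w. (1/2) * quadf M (x - w)) (\<lambda>w. - (M *v (x - w))) (\<lambda>_. M)"
  unfolding C2_on_def
proof (intro conjI ballI)
  fix w :: "real^'n"
  have "((\<lambda>w. x - w) has_derivative uminus) (at w)"
    by (auto intro!: derivative_eq_intros)
  from has_derivative_compose[OF this has_derivative_quadf[OF assms]]
  have "((\<lambda>w. quadf M (x - w)) has_derivative (\<lambda>h. 2 * ((M *v (x - w)) \<bullet> - h))) (at w)" .
  from has_derivative_mult_right[OF this, of "1/2"]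
  show "((\<lambda>w. (1/2) * quadf M (x - w)) has_derivative (\<lambda>h. (- (M *v (x - w))) \<bullet> h)) (at w)"
    by simp
  have "(\<lambda>w. - (M *v (x - w))) = (\<lambda>w. M *v w - M *v x)"
    by (simp add: matrix_vector_mult_diff_distrib)
  then show "((\<lambda>w. - (M *v (x - w))) has_derivative (\<lambda>h. M *v h)) (at w)"
    by (auto intro!: derivative_eq_intros
        bounded_linear.has_derivative[OF matrix_vector_mul_bounded_linear])
qed simp

lemma C2_on_uminus:
  assumes "C2_on S phi Dphi D2phi"
  shows "C2_on S (\<lambda>w. - phi w) (\<lambda>w. - Dphi w) (\<lambda>w. - D2phi w)"
  unfolding C2_on_def
proof (intro conjI ballI)
  fix y assume "y \<in> S"
  with assms have phi: "(phi has_derivative (\<lambda>h. Dphi y \<bullet> h)) (at y)"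
    and Dphi: "(Dphi has_derivative (\<lambda>h. D2phi y *v h)) (at y)"
    unfolding C2_on_def by auto
  show "((\<lambda>w. - phi w) has_derivative (\<lambda>h. - Dphi y \<bullet> h)) (at y)"
    using has_derivative_minus[OF phi] by simp
  have "(- D2phi y) *v h = - (D2phi y *v h)" for h
    using matrix_vector_mult_diff_rdistrib[of 0 "D2phi y" h] by simp
  then show "((\<lambda>w. - Dphi w) has_derivative (\<lambda>h. (- D2phi y) *v h)) (at y)"
    using has_derivative_minus[OF Dphi] by simp
next
  show "continuous_on S (\<lambda>w. - D2phi w)"
    using assms unfolding C2_on_def by (auto intro: continuous_on_minus)
qed

lemma visc_super_at_min_contact:
  assumes "visc_super \<Omega> Fq V" and "posdef M"
    and "is_min_contact \<Omega> V x M z" and "z \<in> \<Omega>"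
  shows "Fq z (V z) (M *v (x - z)) (- M) \<ge> 0"
proof -
  have "transpose M = M"
    using assms(2) by (simp add: posdef_def)
  define phi where "phi = (\<lambda>w. - ((1/2) * quadf M (x - w)))"
  have "C2_on \<Omega> phi (\<lambda>w. M *v (x - w)) (\<lambda>_. - M)"
    using C2_on_uminus[OF C2_on_half_quadf_diff[OF \<open>transpose M = M\<close>]]
    unfolding phi_def by simp
  moreover have "V z - phi z \<le> V y - phi y" if "y \<in> \<Omega>" for y
  proof -
    have "y \<in> closure \<Omega>"
      using that closure_subset by blast
    then show ?thesis
      using assms(3) unfolding is_min_contact_def phi_def by simp
  qed
  ultimately show ?thesis
    using assms(1,4) unfolding visc_super_def by (meson zero_less_one)
qed

lemma visc_sub_at_max_contact:
  assumes "visc_sub \<Omega> Fq V" and "posdef M"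
    and "is_max_contact \<Omega> V x M z" and "z \<in> \<Omega>"
  shows "Fq z (V z) (- (M *v (x - z))) M \<le> 0"
proof -
  have "transpose M = M"
    using assms(2) by (simp add: posdef_def)
  define phi where "phi = (\<lambda>w. (1/2) * quadf M (x - w))"
  have "C2_on \<Omega> phi (\<lambda>w. - (M *v (x - w))) (\<lambda>_. M)"
    unfolding phi_def by (rule C2_on_half_quadf_diff[OF \<open>transpose M = M\<close>])
  moreover have "V y - phi y \<le> V z - phi z" if "y \<in> \<Omega>" for y
  proof -
    have "y \<in> closure \<Omega>"
      using that closure_subset by blast
    then show ?thesis
      using assms(3) unfolding is_max_contact_def phi_def by simp
  qed
  ultimately show ?thesis
    using assms(1,4) unfolding visc_sub_def by (meson zero_less_one)
qed

lemma J_super_nonneg: "J_super \<Omega> Fq V zmin x M \<ge> 0"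
  by (simp add: J_super_def Let_def)

lemma J_sub_nonneg: "J_sub \<Omega> Fq V zmax x M \<ge> 0"
  by (simp add: J_sub_def Let_def)

lemma J_super_eq_0_iff:
  "J_super \<Omega> Fq V zmin x M = 0 \<longleftrightarrow>
     (zmin x M \<in> \<Omega> \<longrightarrow> Fq (zmin x M) (V (zmin x M)) (M *v (x - zmin x M)) (- M) \<ge> 0)"
  by (auto simp: J_super_def Let_def max_def)

lemma J_sub_eq_0_iff:
  "J_sub \<Omega> Fq V zmax x M = 0 \<longleftrightarrow>
     (zmax x M \<in> \<Omega> \<longrightarrow> Fq (zmax x M) (V (zmax x M)) (- (M *v (x - zmax x M))) M \<le> 0)"
  by (auto simp: J_sub_def Let_def max_def)

lemma J_super_J_sub_eq_0_if_visc_solution: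
  assumes "visc_solution \<Omega> Fq V" and "contact_choice \<Omega> V zmin zmax"
    and "x \<in> closure \<Omega>" and "posdef M"
  shows "J_super \<Omega> Fq V zmin x M = 0" and "J_sub \<Omega> Fq V zmax x M = 0"
  using assms visc_super_at_min_contact visc_sub_at_max_contact
  unfolding J_super_eq_0_iff J_sub_eq_0_iff visc_solution_def contact_choice_def
  by blast+

lemma AE_pair_measure_in_Times:
  assumes "prob_space \<mu>" and "prob_space \<nu>"
    and "emeasure \<mu> A = 1" and "emeasure \<nu> B = 1"
  shows "AE z in \<mu> \<Otimes>\<^sub>M \<nu>. z \<in> A \<times> B"
proof -
  interpret \<nu>: prob_space \<nu> by fact
  interpret \<mu>\<nu>: prob_space "\<mu> \<Otimes>\<^sub>M \<nu>"
    using assms(1,2) by (rule prob_space_pair)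
  have A: "A \<in> sets \<mu>" and B: "B \<in> sets \<nu>"
    using assms(3,4) emeasure_notin_sets by fastforce+
  have "emeasure (\<mu> \<Otimes>\<^sub>M \<nu>) (A \<times> B) = 1"
    using \<nu>.emeasure_pair_measure_Times[OF A B] assms(3,4) by simp
  with A B show ?thesis
    by (simp add: \<mu>\<nu>.AE_in_set_eq_1 \<mu>\<nu>.emeasure_eq_measure)
qed

lemma Jcost_eq_0_if_visc_solution:
  assumes "prob_space \<nu>X" and "prob_space \<nu>M"
    and "emeasure \<nu>X (closure \<Omega>) = 1" and "emeasure \<nu>M {M. posdef M} = 1"
    and "visc_solution \<Omega> Fq V" and "contact_choice \<Omega> V zmin zmax"
  shows "Jcost \<nu>X \<nu>M \<Omega> Fq V zmin zmax = 0"
proof -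
  have "AE xm in \<nu>X \<Otimes>\<^sub>M \<nu>M.
      ennreal (J_super \<Omega> Fq V zmin (fst xm) (snd xm) + J_sub \<Omega> Fq V zmax (fst xm) (snd xm)) = 0"
    using AE_pair_measure_in_Times[OF assms(1-4)]
  proof eventually_elim
    case (elim xm)
    then show ?case
      using J_super_J_sub_eq_0_if_visc_solution[OF assms(5,6)] by (auto simp: mem_Times_iff)
  qed
  then show ?thesis
    unfolding Jcost_def by (simp add: nn_integral_cong_AE)
qed

lemma AE_contact_inequalities_if_Jcost_eq_0:
  assumes "(\<lambda>xm. J_super \<Omega> Fq V zmin (fst xm) (snd xm) + J_sub \<Omega> Fq V zmax (fst xm) (snd xm))
      \<in> borel_measurable (\<nu>X \<Otimes>\<^sub>M \<nu>M)"
    and "Jcost \<nu>X \<nu>M \<Omega> Fq V zmin zmax = 0"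
  shows "AE xm in \<nu>X \<Otimes>\<^sub>M \<nu>M.
      (zmin (fst xm) (snd xm) \<in> \<Omega> \<longrightarrow>
         Fq (zmin (fst xm) (snd xm)) (V (zmin (fst xm) (snd xm)))
           (snd xm *v (fst xm - zmin (fst xm) (snd xm))) (- snd xm) \<ge> 0)
    \<and> (zmax (fst xm) (snd xm) \<in> \<Omega> \<longrightarrow>
         Fq (zmax (fst xm) (snd xm)) (V (zmax (fst xm) (snd xm)))
           (- (snd xm *v (fst xm - zmax (fst xm) (snd xm)))) (snd xm) \<le> 0)"
proof -
  have "AE xm in \<nu>X \<Otimes>\<^sub>M \<nu>M.
      ennreal (J_super \<Omega> Fq V zmin (fst xm) (snd xm) + J_sub \<Omega> Fq V zmax (fst xm) (snd xm)) = 0"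
    using assms by (simp add: Jcost_def nn_integral_0_iff_AE)
  then show ?thesis
  proof eventually_elim
    case (elim xm)
    then have "J_super \<Omega> Fq V zmin (fst xm) (snd xm) = 0 \<and> J_sub \<Omega> Fq V zmax (fst xm) (snd xm) = 0"
      using J_super_nonneg J_sub_nonneg by (smt (verit) ennreal_eq_0_iff)
    then show ?case
      unfolding J_super_eq_0_iff J_sub_eq_0_iff .
  qed
qed

theorem corollary2p11:
  fixes \<Omega> :: "(real^'n) set" and U :: "(real^'m) set" and \<beta> :: real
    and f :: "real^'n \<Rightarrow> real^'m \<Rightarrow> real^'n"
    and Sig :: "real^'n \<Rightarrow> real^'m \<Rightarrow> real^'n^'n"
    and l :: "real^'n \<Rightarrow> real^'m \<Rightarrow> real"
    and g :: "real^'n \<Rightarrow> real"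
    and \<nu>X :: "(real^'n) measure" and \<nu>M :: "(real^'n^'n) measure"
  assumes \<Omega>_open: "open \<Omega>" and \<Omega>_bdd: "bounded \<Omega>"
    and U_compact: "compact U" and U_ne: "U \<noteq> {}"
    and \<beta>_nonneg: "\<beta> \<ge> 0"
    and f_cont: "continuous_on (closure \<Omega> \<times> U) (\<lambda>z. f (fst z) (snd z))"
    and Sig_cont: "continuous_on (closure \<Omega> \<times> U) (\<lambda>z. Sig (fst z) (snd z))"
    and l_cont: "continuous_on (closure \<Omega> \<times> U) (\<lambda>z. l (fst z) (snd z))"
    and f_lip: "\<exists>L. \<forall>c\<in>U. L-lipschitz_on (closure \<Omega>) (\<lambda>x. f x c)"
    and Sig_lip: "\<exists>L. \<forall>c\<in>U. L-lipschitz_on (closure \<Omega>) (\<lambda>x. Sig x c)"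
    and f_growth: "\<exists>K. \<forall>x\<in>closure \<Omega>. \<forall>c\<in>U. norm (f x c) \<le> K * (1 + norm x)"
    and Sig_growth: "\<exists>K. \<forall>x\<in>closure \<Omega>. \<forall>c\<in>U. norm (Sig x c) \<le> K * (1 + norm x)"
    and nondeg: "\<beta> > 0 \<or> (\<exists>lam Lam. 0 < lam \<and> lam \<le> Lam \<and>
        (\<forall>x\<in>closure \<Omega>. \<forall>c\<in>U. \<forall>v.
           lam * (v \<bullet> v) \<le> quadf (Sig x c ** transpose (Sig x c)) v
         \<and> quadf (Sig x c ** transpose (Sig x c)) v \<le> Lam * (v \<bullet> v)))"
    and g_cont: "continuous_on (frontier \<Omega>) g"
    and \<nu>X_prob: "prob_space \<nu>X" and \<nu>X_sets: "sets \<nu>X = sets borel"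
    and \<nu>X_supp: "emeasure \<nu>X (closure \<Omega>) = 1"
    and \<nu>M_prob: "prob_space \<nu>M" and \<nu>M_sets: "sets \<nu>M = sets borel"
    and \<nu>M_supp: "emeasure \<nu>M {M. posdef M} = 1"
  shows
   "(\<forall>V zmin zmax. continuous_on (closure \<Omega>) V
        \<and> visc_solution \<Omega> (Fop \<beta> U l f Sig) V
        \<and> contact_choice \<Omega> V zmin zmax
      \<longrightarrow> Jcost \<nu>X \<nu>M \<Omega> (Fop \<beta> U l f Sig) V zmin zmax = 0)
  \<and> (\<forall>V zmin zmax. continuous_on (closure \<Omega>) V
        \<and> visc_solution \<Omega> (Fop \<beta> U l f Sig) V
        \<and> (\<forall>x\<in>frontier \<Omega>. V x = g x)
        \<and> contact_choice \<Omega> V zmin zmax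
      \<longrightarrow> Jcost \<nu>X \<nu>M \<Omega> (Fop \<beta> U l f Sig) V zmin zmax = 0)
  \<and> (\<forall>V zmin zmax. continuous_on (closure \<Omega>) V
        \<and> contact_choice \<Omega> V zmin zmax
        \<and> (\<lambda>xm. J_super \<Omega> (Fop \<beta> U l f Sig) V zmin (fst xm) (snd xm)
               + J_sub \<Omega> (Fop \<beta> U l f Sig) V zmax (fst xm) (snd xm))
            \<in> borel_measurable (\<nu>X \<Otimes>\<^sub>M \<nu>M)
        \<and> Jcost \<nu>X \<nu>M \<Omega> (Fop \<beta> U l f Sig) V zmin zmax = 0
      \<longrightarrow> (AE xm in \<nu>X \<Otimes>\<^sub>M \<nu>M.
            (zmin (fst xm) (snd xm) \<in> \<Omega> \<longrightarrow>
               Fop \<beta> U l f Sig (zmin (fst xm) (snd xm)) (V (zmin (fst xm) (snd xm)))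
                 (snd xm *v (fst xm - zmin (fst xm) (snd xm))) (- snd xm) \<ge> 0)
          \<and> (zmax (fst xm) (snd xm) \<in> \<Omega> \<longrightarrow>
               Fop \<beta> U l f Sig (zmax (fst xm) (snd xm)) (V (zmax (fst xm) (snd xm)))
                 (- (snd xm *v (fst xm - zmax (fst xm) (snd xm)))) (snd xm) \<le> 0)))"
proof -
  have Jcost_eq_0: "Jcost \<nu>X \<nu>M \<Omega> (Fop \<beta> U l f Sig) V zmin zmax = 0"
    if "visc_solution \<Omega> (Fop \<beta> U l f Sig) V" and "contact_choice \<Omega> V zmin zmax"
    for V zmin zmax
    using Jcost_eq_0_if_visc_solution[OF \<nu>X_prob \<nu>M_prob \<nu>X_supp \<nu>M_supp that] .
  show ?thesis
    using Jcost_eq_0 AE_contact_inequalities_if_Jcost_eq_0[where Fq = "Fop \<beta> U l f Sig"]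
    by blast
qed

end
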